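(* Let $a,b,c>0$ and let $d,e$ be real numbers, not in $\{0,-1,-2,\dots\}$, such that $de\ge 3abc$ and $$d+e\ \ge\ \max\Big\{a+b+c,\ \alpha(a,b,c),\ 3(ab+bc+ac)-7abc\Big\},\qquad \alpha(a,b,c)=\tfrac13\big(2(ab+bc+ac)+3(a+b+c)-6abc-1\big).$$ Then $f(z)=z\,{}_3F_2(a,b,c;d,e;z^2)$ is close-to-convex in $\mathbb{D}$ with respect to $\frac12\log\big((1+z)/(1-z)\big)$.
   Context: $\mathbb{D}=\{z\in\mathbb{C}:|z|<1\}$. For $x\in\mathbb{C}$, $(x)_0=1$ and $(x)_n=x(x+1)\cdots(x+n-1)$ for $n\ge1$. The Clausen hypergeometric function is ${}_3F_2(a,b,c;d,e;z)=\sum_{n=0}^\infty \frac{(a)_n(b)_n(c)_n}{(d)_n(e)_n(1)_n}z^n$ for $|z|<1$ (with $d,e\notin\{0,-1,-2,\dots\}$). A normalized analytic function $f$ on $\mathbb{D}$ ($f(0)=0$, $f'(0)=1$) is close-to-convex with respect to a convex univalent function $g$ on $\mathbb{D}$ if $f$ is univalent on $\mathbb{D}$ and $\operatorname{Re}\big(f'(z)/g'(z)\big)>0$ for all $z\in\mathbb{D}$. Here $g(z)=\frac12\log\frac{1+z}{1-z}$, which is convex univalent on $\mathbb{D}$, with $g'(z)=1/(1-z^2)$. *)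

theory Defs
  imports "HOL-Analysis.Analysis"
begin

text \<open>Clausen hypergeometric function 3F2(a,b,c;d,e;z) as its power series (meant for |z|<1).\<close>
definition hyp3F2 :: "real \<Rightarrow> real \<Rightarrow> real \<Rightarrow> real \<Rightarrow> real \<Rightarrow> complex \<Rightarrow> complex" where
  "hyp3F2 a b c d e z =
     (\<Sum>n. complex_of_real ((pochhammer a n * pochhammer b n * pochhammer c n) /
            (pochhammer d n * pochhammer e n * pochhammer 1 n)) * z ^ n)"

definition close_to_convex_wrt :: "(complex \<Rightarrow> complex) \<Rightarrow> (complex \<Rightarrow> complex) \<Rightarrow> bool" where
  "close_to_convex_wrt f g \<longleftrightarrow>
     f holomorphic_on ball 0 1 \<and> f 0 = 0 \<and> deriv f 0 = 1 \<and>
     inj_on f (ball 0 1) \<and>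
     (\<forall>z\<in>ball 0 1. Re (deriv f z / deriv g z) > 0)"

definition alpha3 :: "real \<Rightarrow> real \<Rightarrow> real \<Rightarrow> real" where
  "alpha3 a b c = (2 * (a*b + b*c + a*c) + 3 * (a + b + c) - 6 * a*b*c - 1) / 3"

end

theory Submission
  imports Defs
begin

(* Write f(z) = \<Sum> A_n z^(2n+1) with A_n the coefficients of 3F2.  The comparison function is
   g = artanh, so f'(z) / g'(z) = (1 - z^2) \<Sum> B_n z^(2n) with B_n = (2n+1) A_n.  The conditions on
   d and e make B_n decreasing: B_n - B_(n+1) is a positive multiple of a cubic in n with
   nonnegative coefficients.  For a decreasing B \<ge> 0 with limit L,
   (1 - w) \<Sum> B_n w^n = B_0 - \<Sum> (B_n - B_(n+1)) w^(n+1), and the subtracted series has modulus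
   at most |w| (B_0 - L) < B_0, so Re (f'/g') > 0 on the disc.  Univalence then follows from the
   Noshiro-Warschawski argument applied to f \<circ> tanh on the convex strip |Im u| < pi/4, which
   contains artanh of the disc. *)

definition hyp3F2_coeff :: "real \<Rightarrow> real \<Rightarrow> real \<Rightarrow> real \<Rightarrow> real \<Rightarrow> nat \<Rightarrow> real" where
  "hyp3F2_coeff a b c d e n =
     (pochhammer a n * pochhammer b n * pochhammer c n) /
     (pochhammer d n * pochhammer e n * pochhammer 1 n)"

lemma hyp3F2_eq_powser:
  "hyp3F2 a b c d e = (\<lambda>w. \<Sum>n. complex_of_real (hyp3F2_coeff a b c d e n) * w ^ n)"
  by (simp add: hyp3F2_def hyp3F2_coeff_def fun_eq_iff)

lemma hyp3F2_coeff_0 [simp]: "hyp3F2_coeff a b c d e 0 = 1"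
  by (simp add: hyp3F2_coeff_def)

lemma hyp3F2_coeff_Suc:
  "hyp3F2_coeff a b c d e (Suc n) =
     hyp3F2_coeff a b c d e n * ((a + n) * (b + n) * (c + n) / ((d + n) * (e + n) * (n + 1)))"
  by (simp add: hyp3F2_coeff_def pochhammer_Suc add.commute mult_ac)

lemma hyp3F2_coeff_pos:
  assumes "a > 0" "b > 0" "c > 0" "d > 0" "e > 0"
  shows "hyp3F2_coeff a b c d e n > 0"
  unfolding hyp3F2_coeff_def using assms by (intro divide_pos_pos mult_pos_pos pochhammer_pos) auto

lemma shifted_products_le:
  fixes a b c d e x :: real
  assumes "x \<ge> 0" "d * e \<ge> 3 * a * b * c" "d + e \<ge> a + b + c" "d + e \<ge> alpha3 a b c"
    and "d + e \<ge> 3 * (a*b + b*c + a*c) - 7 * a*b*c"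
  shows "(2*x + 3) * (a + x) * (b + x) * (c + x) \<le> (2*x + 1) * (d + x) * (e + x) * (x + 1)"
proof -
  define p q t1 t2 t3 :: real
    where "p = d + e" "q = d * e" "t1 = a + b + c" "t2 = a*b + b*c + a*c" "t3 = a*b*c"
  have "(2*x + 1) * (d + x) * (e + x) * (x + 1) - (2*x + 3) * (a + x) * (b + x) * (c + x)
     = 2*(p - t1)*x^3 + (2*q + 3*p + 1 - 2*t2 - 3*t1)*x^2 + (3*q + p - 2*t3 - 3*t2)*x + (q - 3*t3)"
    unfolding p_q_t1_t2_t3_def by (simp add: algebra_simps power2_eq_square power3_eq_cube)
  also have "\<dots> \<ge> 0"
    using assms unfolding p_q_t1_t2_t3_def alpha3_def
    by (intro add_nonneg_nonneg mult_nonneg_nonneg) auto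
  finally show ?thesis by simp
qed

lemma decseq_odd_weighted_hyp3F2_coeff:
  fixes a b c d e :: real
  assumes "a > 0" "b > 0" "c > 0" "d > 0" "e > 0" "d * e \<ge> 3 * a * b * c"
    and "d + e \<ge> a + b + c" "d + e \<ge> alpha3 a b c"
    and "d + e \<ge> 3 * (a*b + b*c + a*c) - 7 * a*b*c"
  shows "decseq (\<lambda>n. (2 * real n + 1) * hyp3F2_coeff a b c d e n)"
proof (rule decseq_SucI)
  fix n
  let ?A = "hyp3F2_coeff a b c d e n" and ?x = "real n"
  have "(2*?x + 3) * (a + ?x) * (b + ?x) * (c + ?x) \<le> (2*?x + 1) * (d + ?x) * (e + ?x) * (?x + 1)"
    using assms by (intro shifted_products_le) auto
  moreover have "(d + ?x) * (e + ?x) * (?x + 1) > 0" "?A > 0"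
    using assms hyp3F2_coeff_pos by auto
  ultimately have "(2*?x + 3) * ((a + ?x) * (b + ?x) * (c + ?x) / ((d + ?x) * (e + ?x) * (?x + 1))) * ?A
      \<le> (2*?x + 1) * ?A"
    by (intro mult_right_mono) (auto simp: divide_le_eq algebra_simps)
  then show "(2 * real (Suc n) + 1) * hyp3F2_coeff a b c d e (Suc n) \<le> (2 * ?x + 1) * ?A"
    by (simp add: hyp3F2_coeff_Suc algebra_simps)
qed

lemma summable_powser_bounded_coeffs:
  fixes c :: "nat \<Rightarrow> 'a::{real_normed_div_algebra,banach}"
  assumes "norm w < 1" "\<And>n. norm (c n) \<le> M"
  shows "summable (\<lambda>n. c n * w ^ n)"
proof (rule summable_comparison_test'[where g = "\<lambda>n. M * norm w ^ n" and N = 0])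
  show "summable (\<lambda>n. M * norm w ^ n)"
    using assms(1) by (intro summable_mult summable_geometric) simp
  show "norm (c n * w ^ n) \<le> M * norm w ^ n" for n
    using assms(2)[of n] by (simp add: norm_mult norm_power mult_right_mono)
qed

lemma has_field_derivative_odd_powser:
  fixes c :: "nat \<Rightarrow> 'a::{real_normed_field,banach}"
  assumes summable: "\<And>w. norm w < K \<Longrightarrow> summable (\<lambda>n. c n * w ^ n)" and z: "norm (z^2) < K"
  shows "((\<lambda>z. z * (\<Sum>n. c n * (z^2) ^ n)) has_field_derivative
           (\<Sum>n. of_nat (2*n + 1) * c n * (z^2) ^ n)) (at z)"
proof -
  define F where "F = (\<Sum>n. c n * (z^2) ^ n)"
  define F' where "F' = (\<Sum>n. diffs c n * (z^2) ^ n)"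
  have "((\<lambda>w. \<Sum>n. c n * w ^ n) has_field_derivative F') (at (z^2))"
    unfolding F'_def using summable z by (rule termdiffs_strong')
  then have "((\<lambda>z. \<Sum>n. c n * (z^2) ^ n) has_field_derivative F' * (2 * z)) (at z)"
    by (rule DERIV_chain2[where g = "\<lambda>z. z^2"]) (auto intro!: derivative_eq_intros)
  from DERIV_mult'[OF DERIV_ident this]
  have "((\<lambda>z. z * (\<Sum>n. c n * (z^2) ^ n)) has_field_derivative F + z * (F' * (2 * z))) (at z)"
    unfolding F_def by (simp add: add.commute)
  moreover have "F + z * (F' * (2 * z)) = (\<Sum>n. of_nat (2*n + 1) * c n * (z^2) ^ n)"
  proof -
    have "(\<lambda>n. c n * (z^2) ^ n) sums F"
      unfolding F_def using summable[OF z] by (rule summable_sums)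
    moreover have "(\<lambda>n. diffs c n * (z^2) ^ n) sums F'"
      unfolding F'_def using termdiff_converges[OF z summable] by (rule summable_sums)
    from sums_mult2[OF this, of "z^2"]
    have "(\<lambda>n. of_nat (Suc n) * c (Suc n) * (z^2) ^ Suc n) sums (z^2 * F')"
      by (simp add: diffs_def mult_ac)
    then have "(\<lambda>n. of_nat n * c n * (z^2) ^ n) sums (z^2 * F')"
      using sums_Suc_iff[of "\<lambda>n. of_nat n * c n * (z^2) ^ n"] by simp
    ultimately have "(\<lambda>n. c n * (z^2) ^ n + 2 * (of_nat n * c n * (z^2) ^ n)) sums (F + 2 * (z^2 * F'))"
      by (intro sums_add sums_mult)
    then show ?thesis
      by (simp add: sums_iff algebra_simps power2_eq_square)
  qed
  ultimately show ?thesis by simp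
qed

lemma sums_one_minus_mult_powser:
  fixes c :: "nat \<Rightarrow> 'a::real_normed_field"
  assumes "(\<lambda>n. c n * w ^ n) sums P"
  shows "(\<lambda>n. (c (Suc n) - c n) * w ^ Suc n) sums ((1 - w) * P - c 0)"
proof -
  have "(\<lambda>n. c (Suc n) * w ^ Suc n) sums (P - c 0)"
    using assms sums_Suc_iff[of "\<lambda>n. c n * w ^ n"] by simp
  moreover have "(\<lambda>n. c n * w ^ Suc n) sums (w * P)"
    using sums_mult[OF assms, of w] by (simp add: mult_ac)
  ultimately show ?thesis
    using sums_diff by (fastforce simp: algebra_simps)
qed

lemma norm_suminf_diff_powser_le:
  fixes B :: "nat \<Rightarrow> real" and w :: complex
  assumes dec: "decseq B" and lim: "B \<longlonglongrightarrow> L" and w: "norm w \<le> 1"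
  shows "norm (\<Sum>n. complex_of_real (B (Suc n) - B n) * w ^ Suc n) \<le> (B 0 - L) * norm w"
proof -
  have termwise: "norm (complex_of_real (B (Suc n) - B n) * w ^ Suc n) \<le> (B n - B (Suc n)) * norm w"
    for n
  proof -
    have "B (Suc n) \<le> B n"
      using dec by (simp add: decseq_Suc_iff)
    then have "norm (complex_of_real (B (Suc n) - B n) * w ^ Suc n)
        = (B n - B (Suc n)) * (norm w * norm w ^ n)"
      by (simp add: norm_mult norm_power del: of_real_diff)
    also have "\<dots> \<le> (B n - B (Suc n)) * norm w"
      using \<open>B (Suc n) \<le> B n\<close> w by (intro mult_left_mono mult_right_le_one_le power_le_one) auto
    finally show ?thesis .
  qed
  have tele: "(\<lambda>n. (B n - B (Suc n)) * norm w) sums ((B 0 - L) * norm w)"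
    using sums_mult2[OF telescope_sums'[OF lim]] .
  from norm_suminf_le[OF termwise sums_summable[OF tele]] show ?thesis
    by (simp only: sums_unique[OF tele, symmetric])
qed

lemma Re_one_minus_mult_powser_pos:
  fixes B :: "nat \<Rightarrow> real" and w :: complex
  assumes dec: "decseq B" and nonneg: "\<And>n. B n \<ge> 0" and "B 0 > 0" and w: "norm w < 1"
  shows "Re ((1 - w) * (\<Sum>n. complex_of_real (B n) * w ^ n)) > 0"
proof -
  define P where "P = (\<Sum>n. complex_of_real (B n) * w ^ n)"
  define S where "S = (1 - w) * P - B 0"
  have "(\<lambda>n. complex_of_real (B n) * w ^ n) sums P"
    unfolding P_def using dec nonneg
    by (intro summable_sums summable_powser_bounded_coeffs[OF w, of _ "B 0"]) (simp add: decseqD)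
  from sums_one_minus_mult_powser[OF this]
  have "(\<lambda>n. complex_of_real (B (Suc n) - B n) * w ^ Suc n) sums S"
    unfolding S_def by simp
  note S_eq = sums_unique[OF this]
  obtain L where L: "B \<longlonglongrightarrow> L"
    using decseq_convergent[OF dec, of 0] nonneg by blast
  have "L \<ge> 0"
    using L nonneg by (intro LIMSEQ_le_const) auto
  have "norm S \<le> (B 0 - L) * norm w"
    unfolding S_eq using w by (intro norm_suminf_diff_powser_le[OF dec L]) simp
  also have "\<dots> \<le> B 0 * norm w"
    using \<open>L \<ge> 0\<close> by (intro mult_right_mono) auto
  also have "\<dots> < B 0"
    using \<open>B 0 > 0\<close> w by simp
  finally have "norm S < B 0" .
  moreover have "Re S \<ge> - norm S"
    using abs_Re_le_cmod[of S] by linarith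
  moreover have "(1 - w) * P = complex_of_real (B 0) + S"
    by (simp add: S_def)
  ultimately show ?thesis
    unfolding P_def[symmetric] by simp
qed

lemma inj_on_if_Re_deriv_pos:
  fixes f :: "complex \<Rightarrow> complex"
  assumes "convex S"
    and deriv: "\<And>z. z \<in> S \<Longrightarrow> (f has_field_derivative f' z) (at z)"
    and pos: "\<And>z. z \<in> S \<Longrightarrow> Re (f' z) > 0"
  shows "inj_on f S"
proof (rule inj_onI, rule ccontr)
  fix w z assume "w \<in> S" "z \<in> S" "f w = f z" "w \<noteq> z"
  have segment: "closed_segment w z \<subseteq> S"
    using \<open>convex S\<close> \<open>w \<in> S\<close> \<open>z \<in> S\<close> by (simp add: convex_contains_segment)
  obtain u where "u \<in> closed_segment w z"
    and "Re (f z / (z - w)) - Re (f w / (z - w)) = Re (f' u / (z - w) * (z - w))"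
    using complex_mvt_line[of w z "\<lambda>u. f u / (z - w)" "\<lambda>u. f' u / (z - w)"]
      segment deriv by (auto intro: DERIV_cdivide)
  then have "Re (f' u) = 0"
    using \<open>f w = f z\<close> \<open>w \<noteq> z\<close> by simp
  with pos segment \<open>u \<in> closed_segment w z\<close> show False
    by fastforce
qed

lemma tanh_eq_exp_double: "tanh w = (exp (2 * w) - 1) / (exp (2 * w) + 1)"
  for w :: "'a::{banach, real_normed_field}"
proof -
  define E where "E = exp w"
  have "E \<noteq> 0" "exp (2 * w) = E * E"
    unfolding E_def by (simp_all only: exp_not_eq_zero exp_double power2_eq_square not_False_eq_True)
  have "tanh w = (E * (E - inverse E)) / (E * (E + inverse E))"
    using \<open>E \<noteq> 0\<close> unfolding E_def by (simp add: tanh_altdef exp_minus)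
  also have "\<dots> = (E * E - 1) / (E * E + 1)"
    using \<open>E \<noteq> 0\<close> by (simp add: algebra_simps)
  finally show ?thesis
    unfolding \<open>exp (2 * w) = E * E\<close> .
qed

lemma Re_exp_double_pos:
  assumes "\<bar>Im u\<bar> < pi / 4"
  shows "Re (exp (2 * u)) > 0"
proof -
  have "cos (2 * Im u) > 0"
    using assms by (intro cos_gt_zero_pi) auto
  then show ?thesis
    by (simp add: Re_exp)
qed

lemma norm_tanh_less_one:
  assumes "\<bar>Im u\<bar> < pi / 4"
  shows "norm (tanh u) < 1"
proof -
  define E where "E = exp (2 * u)"
  have "Re E > 0"
    unfolding E_def using assms by (rule Re_exp_double_pos)
  then have "norm (E - 1) ^ 2 < norm (E + 1) ^ 2"
    unfolding cmod_power2 by (simp add: power2_eq_square algebra_simps)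
  then have "norm (E - 1) < norm (E + 1)"
    by (rule power_less_imp_less_base) simp
  then show ?thesis
    by (simp add: tanh_eq_exp_double E_def[symmetric] norm_divide divide_less_eq)
qed

lemma has_field_derivative_tanh_strip:
  assumes "\<bar>Im u\<bar> < pi / 4"
  shows "(tanh has_field_derivative 1 - tanh u ^ 2) (at u)"
proof -
  have "cosh u \<noteq> 0"
    using Re_exp_double_pos[OF assms] by (auto simp: cosh_zero_iff exp_double[symmetric])
  then show ?thesis
    by (auto intro!: derivative_eq_intros)
qed

lemma Re_one_plus_div_one_minus_pos:
  fixes z :: complex
  assumes "norm z < 1"
  shows "Re ((1 + z) / (1 - z)) > 0"
proof -
  have "Re ((1 + z) * cnj (1 - z)) = 1 - norm z ^ 2"
    unfolding cmod_power2 by (simp add: power2_eq_square algebra_simps)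
  then show ?thesis
    using assms by (simp add: Re_complex_div_gt_0 power_less_one_iff)
qed

lemma abs_Im_artanh_less:
  fixes z :: complex
  assumes "norm z < 1"
  shows "\<bar>Im (artanh z)\<bar> < pi / 4"
  using Re_Ln_pos_lt_imp[OF Re_one_plus_div_one_minus_pos[OF assms]] by (simp add: artanh_def)

lemma tanh_artanh_complex:
  fixes z :: complex
  assumes "z \<noteq> 1" "z \<noteq> -1"
  shows "tanh (artanh z) = z"
proof -
  have "(1 + z) / (1 - z) \<noteq> 0"
    using assms by (auto simp: add_eq_0_iff)
  then have "exp (2 * artanh z) = (1 + z) / (1 - z)"
    by (simp add: artanh_def)
  moreover have "(1 + z) / (1 - z) - 1 = 2 * z / (1 - z)" "(1 + z) / (1 - z) + 1 = 2 / (1 - z)"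
    using assms by (simp_all add: field_simps)
  ultimately show ?thesis
    using assms by (simp only: tanh_eq_exp_double) simp
qed

lemma has_field_derivative_artanh_complex:
  fixes z :: complex
  assumes "norm z < 1"
  shows "(artanh has_field_derivative 1 / (1 - z^2)) (at z)"
proof -
  have "(1 + z) / (1 - z) \<notin> \<real>\<^sub>\<le>\<^sub>0"
    using Re_one_plus_div_one_minus_pos[OF assms] by (auto simp: nonpos_Reals_def)
  moreover have "1 - z \<noteq> 0" "1 + z \<noteq> 0"
    using assms by (auto simp: add_eq_0_iff)
  moreover have "((\<lambda>z. (1 + z) / (1 - z)) has_field_derivative 2 / (1 - z)^2) (at z)"
    using \<open>1 - z \<noteq> 0\<close> by (auto intro!: derivative_eq_intros simp: field_simps power2_eq_square)
  ultimately have "(artanh has_field_derivative inverse ((1 + z) / (1 - z)) * (2 / (1 - z)^2) / 2) (at z)"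
    unfolding artanh_def[abs_def] by (intro DERIV_cdivide DERIV_chain2[OF has_field_derivative_Ln])
  also have "inverse ((1 + z) / (1 - z)) * (2 / (1 - z)^2) / 2 = 1 / ((1 - z) * (1 + z))"
    using \<open>1 - z \<noteq> 0\<close> \<open>1 + z \<noteq> 0\<close> by (simp add: divide_simps power2_eq_square)
  also have "(1 - z) * (1 + z) = 1 - z^2"
    by (simp add: algebra_simps power2_eq_square)
  finally show ?thesis .
qed

lemma inj_on_ball_if_Re_deriv_ratio_artanh_pos:
  fixes f :: "complex \<Rightarrow> complex"
  assumes deriv: "\<And>z. norm z < 1 \<Longrightarrow> (f has_field_derivative f' z) (at z)"
    and pos: "\<And>z. norm z < 1 \<Longrightarrow> Re ((1 - z^2) * f' z) > 0"
  shows "inj_on f (ball 0 1)"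
proof -
  define T where "T = {u. \<bar>Im u\<bar> < pi / 4}"
  have inj_strip: "inj_on (f \<circ> tanh) T"
  proof (rule inj_on_if_Re_deriv_pos)
    have "T = {u. Im u < pi / 4} \<inter> {u. Im u > - (pi / 4)}"
      unfolding T_def by auto
    then show "convex T"
      by (metis convex_Int convex_halfspace_Im_lt convex_halfspace_Im_gt)
    fix u assume "u \<in> T"
    then have "norm (tanh u) < 1"
      using norm_tanh_less_one by (simp add: T_def)
    show "(f \<circ> tanh has_field_derivative f' (tanh u) * (1 - tanh u ^ 2)) (at u)"
      unfolding comp_def using \<open>u \<in> T\<close> \<open>norm (tanh u) < 1\<close>
      by (intro DERIV_chain2[OF deriv] has_field_derivative_tanh_strip) (auto simp: T_def)
    show "Re (f' (tanh u) * (1 - tanh u ^ 2)) > 0"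
      using pos[OF \<open>norm (tanh u) < 1\<close>] by (simp add: mult.commute)
  qed
  have artanh_in_T: "artanh z \<in> T" and tanh_artanh: "tanh (artanh z) = z"
    if "z \<in> ball 0 1" for z
  proof -
    have "norm z < 1"
      using that by simp
    then have "z \<noteq> 1" "z \<noteq> -1"
      by auto
    with \<open>norm z < 1\<close> show "artanh z \<in> T" "tanh (artanh z) = z"
      using abs_Im_artanh_less tanh_artanh_complex by (auto simp: T_def)
  qed
  have "inj_on artanh (ball (0::complex) 1)"
    by (rule inj_on_inverseI[where g = tanh]) (rule tanh_artanh)
  moreover have "inj_on (f \<circ> tanh) (artanh ` ball 0 1)"
    using inj_strip by (rule inj_on_subset) (auto intro: artanh_in_T)
  ultimately have "inj_on (f \<circ> tanh \<circ> artanh) (ball 0 1)"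
    by (rule comp_inj_on)
  then show ?thesis
    by (rule inj_on_cong[THEN iffD1, rotated]) (simp add: tanh_artanh)
qed

lemma le_first_if_decseq_odd_weighted:
  fixes A :: "nat \<Rightarrow> real"
  assumes "decseq (\<lambda>n. (2 * real n + 1) * A n)" "A n \<ge> 0"
  shows "A n \<le> A 0"
proof -
  have "A n \<le> (2 * real n + 1) * A n"
    using mult_right_mono[of 1 "2 * real n + 1" "A n"] assms(2) by simp
  also have "\<dots> \<le> (2 * real 0 + 1) * A 0"
    using decseqD[OF assms(1), of 0 n] by simp
  finally show ?thesis
    by simp
qed

lemma close_to_convex_odd_powser:
  fixes A :: "nat \<Rightarrow> real"
  assumes A0: "A 0 = 1" and nonneg: "\<And>n. A n \<ge> 0"
    and dec: "decseq (\<lambda>n. (2 * real n + 1) * A n)"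
  shows "close_to_convex_wrt (\<lambda>z. z * (\<Sum>n. complex_of_real (A n) * (z^2) ^ n)) artanh"
proof -
  define f where "f z = z * (\<Sum>n. complex_of_real (A n) * (z^2) ^ n)" for z
  define P where "P w = (\<Sum>n. complex_of_real ((2 * real n + 1) * A n) * w ^ n)" for w
  have "A n \<le> 1" for n
    using le_first_if_decseq_odd_weighted[OF dec nonneg] A0 by simp
  then have summable: "summable (\<lambda>n. complex_of_real (A n) * w ^ n)" if "norm w < 1" for w
    using nonneg that by (intro summable_powser_bounded_coeffs[of w _ 1]) auto
  have f_deriv: "(f has_field_derivative P (z^2)) (at z)" if "norm z < 1" for z
  proof -
    have "norm (z^2) < 1"
      using that by (simp add: norm_power power_less_one_iff)
    from has_field_derivative_odd_powser[of 1 "\<lambda>n. complex_of_real (A n)", OF summable this]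
    show ?thesis
      unfolding f_def[abs_def] P_def by (simp add: add.commute)
  qed
  have Re_pos: "Re ((1 - z^2) * P (z^2)) > 0" if "norm z < 1" for z
    unfolding P_def using dec nonneg A0 that
    by (intro Re_one_minus_mult_powser_pos) (auto simp: norm_power power_less_one_iff)
  have "deriv f z / deriv artanh z = (1 - z^2) * P (z^2)" if "norm z < 1" for z
    using DERIV_imp_deriv[OF f_deriv[OF that]]
      DERIV_imp_deriv[OF has_field_derivative_artanh_complex[OF that]]
    by simp
  then have "Re (deriv f z / deriv artanh z) > 0" if "z \<in> ball 0 1" for z
    using that Re_pos by simp
  moreover have "inj_on f (ball 0 1)"
    using f_deriv Re_pos by (rule inj_on_ball_if_Re_deriv_ratio_artanh_pos)
  moreover have "f holomorphic_on ball 0 1"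
    unfolding holomorphic_on_def field_differentiable_def
    using f_deriv has_field_derivative_at_within by fastforce
  moreover have "deriv f 0 = 1"
    using DERIV_imp_deriv[OF f_deriv[of 0]] A0 by (simp add: P_def)
  ultimately show ?thesis
    unfolding close_to_convex_wrt_def f_def[abs_def] by simp
qed

theorem theorem2p2:
  fixes a b c d e :: real
  assumes "a > 0" "b > 0" "c > 0"
    and "\<forall>n::nat. d \<noteq> - real n" "\<forall>n::nat. e \<noteq> - real n"
    and "d * e \<ge> 3 * a * b * c"
    and "d + e \<ge> Max {a + b + c, alpha3 a b c, 3 * (a*b + b*c + a*c) - 7 * a*b*c}"
  shows "close_to_convex_wrt (\<lambda>z. z * hyp3F2 a b c d e (z ^ 2))
           (\<lambda>z. Ln ((1 + z) / (1 - z)) / 2)"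
proof -
  have bounds: "d + e \<ge> a + b + c" "d + e \<ge> alpha3 a b c"
    "d + e \<ge> 3 * (a*b + b*c + a*c) - 7 * a*b*c"
    using assms(7) by (auto simp: Max_ge_iff)
  have "d * e > 0" "d + e > 0"
    using assms(1-3,6) bounds(1) by (auto intro: less_le_trans[of 0 "3 * a * b * c"])
  then have "d > 0" "e > 0"
    by (auto simp: zero_less_mult_iff)
  have g_eq: "(\<lambda>z. Ln ((1 + z) / (1 - z)) / 2) = artanh"
    by (simp add: artanh_def fun_eq_iff)
  have "decseq (\<lambda>n. (2 * real n + 1) * hyp3F2_coeff a b c d e n)"
    using assms(1-3) \<open>d > 0\<close> \<open>e > 0\<close> assms(6) bounds by (rule decseq_odd_weighted_hyp3F2_coeff)
  then show ?thesis
    unfolding hyp3F2_eq_powser g_eq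
    using assms(1-3) \<open>d > 0\<close> \<open>e > 0\<close>
    by (intro close_to_convex_odd_powser) (auto intro: less_imp_le hyp3F2_coeff_pos)
qed

end
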